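(* Let $N\in\mathbb N$ and $1<p\le\pi^2(N+1/2)^2-1$. Then for every $x\in\mathbb R$, \[\sum_{n\in\mathbb Z,\ |x-n|>N}|\mathrm{sinc}(x-n)|^p\le 2\Big(\frac2\pi\Big)^p\lambda(p;N),\] and equality holds at $x=1/2$.
   Context: $\mathrm{sinc}(x)=\frac{\sin(\pi x)}{\pi x}$ for $x\neq0$ and $\mathrm{sinc}(0)=1$. The incomplete Lambda function is $\lambda(s;a)=\sum_{n=1}^\infty \frac{1}{(2(n+a)-1)^s}$ for $s>1$, $a\ge0$. *)

theory Defs
  imports "HOL-Analysis.Analysis"
begin

definition sinc :: "real \<Rightarrow> real" where
  "sinc x = (if x = 0 then 1 else sin (pi * x) / (pi * x))"

definition incomplete_lambda :: "real \<Rightarrow> real \<Rightarrow> real" where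
  "incomplete_lambda s a = (\<Sum>n. 1 / (2 * (real (Suc n) + a) - 1) powr s)"

end

theory Submission
  imports Defs
begin

text \<open>
  Write \<open>x = m + 1/2 + s\<close> with \<open>m\<close> an integer and \<open>|s| < 1/2\<close>. Then
  \<open>|sin (pi x)| = cos (pi s)\<close>, and the integers \<open>n\<close> with \<open>|x - n| > N\<close> come in pairs with
  \<open>|x - n| = b + s\<close> and \<open>|x - n| = b - s\<close>, where \<open>b = N + k + 1/2\<close>, \<open>k = 0, 1, ...\<close>.
  So it suffices to show \<open>cos (pi s)^p ((b + s)^-p + (b - s)^-p) <= 2 b^-p\<close>, with equality
  at \<open>s = 0\<close>, i.e. at \<open>x = 1/2\<close>. Putting \<open>u = s/b\<close> and \<open>c = pi^2 b^2 / 2 - 1\<close>,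
  Euler's product gives \<open>cos (pi s) <= (1 - u^2) exp (-c u^2)\<close>, and the claim reduces to
  \<open>((1 + u)^p + (1 - u)^p) / 2 <= exp (p c u^2)\<close> for \<open>p <= 2 c + 1\<close>. Comparing logarithmic
  derivatives, this follows from \<open>((1 + y)/(1 - y))^q <= (1 + q y - q y^2)/(1 - q y - q y^2)\<close>
  with \<open>q = 2 c\<close>. The sign of the derivative of the logarithm of the quotient shows that this
  holds for \<open>q >= 1/2\<close>, and, in the critical case \<open>N = 0\<close> where \<open>q = pi^2/4 - 2\<close>, that it
  holds up to \<open>y = 49/50\<close> once it is checked there numerically; beyond that point a crude
  bound suffices.
\<close>

section \<open>Euler's product for the cosine\<close>

lemma sin_factors_double_split:
  fixes s :: real
  shows "(\<Prod>k=1..2*n. 1 - (2 * s)^2 / (real k)^2) =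
         (\<Prod>k=1..n. 1 - s^2 / (real k)^2) * (\<Prod>j<n. 1 - 4 * s^2 / (2 * real j + 1)^2)"
proof (induction n)
  case 0
  show ?case by simp
next
  case (Suc n)
  let ?f = "\<lambda>k. 1 - (2 * s)^2 / (real k)^2"
  let ?g = "\<lambda>k. 1 - s^2 / (real k)^2"
  let ?h = "\<lambda>j. 1 - 4 * s^2 / (2 * real j + 1)^2"
  have "2 * Suc n = Suc (Suc (2*n))" by simp
  then have split: "(\<Prod>k=1..2 * Suc n. ?f k) = (\<Prod>k=1..2*n. ?f k) * ?f (2*n + 1) * ?f (2*n + 2)"
    by (simp add: prod.nat_ivl_Suc' mult_ac)
  have "real (2*n + 2) = 2 * real (Suc n)" by simp
  then have even: "?f (2*n + 2) = ?g (Suc n)"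
    by (simp only: power_mult_distrib) simp
  have odd: "?f (2*n + 1) = ?h n"
    by (simp add: power2_eq_square add.commute)
  have "(\<Prod>k=1..Suc n. ?g k) = (\<Prod>k=1..n. ?g k) * ?g (Suc n)"
    by (simp add: prod.nat_ivl_Suc')
  moreover have "(\<Prod>j<Suc n. ?h j) = (\<Prod>j<n. ?h j) * ?h n"
    by simp
  ultimately show ?case
    unfolding split even odd Suc.IH by (simp add: mult_ac)
qed

lemma cos_product_formula_real:
  fixes s :: real
  assumes "\<bar>s\<bar> < 1"
  shows "(\<lambda>n. \<Prod>j<n. 1 - 4 * s^2 / (2 * real j + 1)^2) \<longlonglongrightarrow> cos (pi * s)"
proof (cases "s = 0")
  case True
  then show ?thesis by simp
next
  case False
  define P where "P n x = (\<Prod>k=1..n. 1 - x^2 / (real k)^2)" for n x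
  have P_nonzero: "P n s \<noteq> 0" for n
  proof -
    have "1 - s^2 / (real k)^2 \<noteq> 0" if "k \<in> {1..n}" for k
    proof
      assume "1 - s^2 / (real k)^2 = 0"
      then have "s^2 = (real k)^2" using that by (simp add: field_simps)
      then have "\<bar>s\<bar> = real k" using abs_of_nonneg power2_eq_iff by fastforce
      then show False using that assms by auto
    qed
    then show ?thesis unfolding P_def by (simp add: prod_zero_iff)
  qed
  have sin_nonzero: "sin (pi * s) \<noteq> 0"
  proof
    assume "sin (pi * s) = 0"
    then obtain m :: int where "s = m" using sin_zero_iff_int2 by auto
    then show False using assms False by (cases m rule: int_cases3) auto
  qed
  have "(\<lambda>n. P n s) \<longlonglongrightarrow> sin (pi * s) / (pi * s)"
    unfolding P_def using sin_product_formula_real'[OF False] by simp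
  moreover have "(\<lambda>n. P n (2 * s)) \<longlonglongrightarrow> sin (pi * (2 * s)) / (pi * (2 * s))"
    unfolding P_def using sin_product_formula_real'[of "2 * s"] False by simp
  then have "(\<lambda>n. P (2*n) (2 * s)) \<longlonglongrightarrow> sin (pi * (2 * s)) / (pi * (2 * s))"
    using LIMSEQ_subseq_LIMSEQ[of _ _ "\<lambda>n. 2*n"] by (simp add: strict_mono_def o_def)
  ultimately have "(\<lambda>n. P (2*n) (2 * s) / P n s)
      \<longlonglongrightarrow> (sin (pi * (2 * s)) / (pi * (2 * s))) / (sin (pi * s) / (pi * s))"
    using sin_nonzero False by (intro tendsto_divide) auto
  also have "(sin (pi * (2 * s)) / (pi * (2 * s))) / (sin (pi * s) / (pi * s)) = cos (pi * s)"
    using sin_double[of "pi * s"] sin_nonzero False by (simp add: field_simps mult_ac)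
  also have "(\<lambda>n. P (2*n) (2 * s) / P n s) = (\<lambda>n. \<Prod>j<n. 1 - 4 * s^2 / (2 * real j + 1)^2)"
  proof
    fix n
    have "P (2*n) (2 * s) = P n s * (\<Prod>j<n. 1 - 4 * s^2 / (2 * real j + 1)^2)"
      unfolding P_def by (rule sin_factors_double_split)
    then show "P (2*n) (2 * s) / P n s = (\<Prod>j<n. 1 - 4 * s^2 / (2 * real j + 1)^2)"
      using P_nonzero[of n] by simp
  qed
  finally show ?thesis .
qed

lemma sums_inverse_odd_squares: "(\<lambda>j. 1 / (2 * real j + 1)^2) sums (pi^2 / 8)"
proof -
  define H where "H m = (\<Sum>i<m. 1 / (real i + 1)^2)" for m
  have H_limit: "H \<longlonglongrightarrow> pi^2 / 6"
    using inverse_squares_sums unfolding sums_def H_def by (simp add: add.commute)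
  have H_double: "H (2*n) = (\<Sum>j<n. 1 / (2 * real j + 1)^2) + H n / 4" for n
  proof (induction n)
    case 0
    show ?case by (simp add: H_def)
  next
    case (Suc n)
    have "2 * Suc n = Suc (Suc (2*n))" by simp
    then have "H (2 * Suc n) = H (2*n) + 1 / (2 * real n + 1)^2 + 1 / (2 * real n + 2)^2"
      by (simp add: H_def add.commute)
    also have "2 * real n + 2 = 2 * (real n + 1)" by simp
    then have "1 / (2 * real n + 2)^2 = (1 / (real n + 1)^2) / 4"
      by (simp only: power_mult_distrib) simp
    finally have "H (2 * Suc n) = H (2*n) + 1 / (2 * real n + 1)^2 + (1 / (real n + 1)^2) / 4" .
    moreover have "H (Suc n) = H n + 1 / (real n + 1)^2" by (simp add: H_def)
    ultimately show ?case
      unfolding Suc.IH by (simp add: add_divide_distrib)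
  qed
  have H_double_limit: "(\<lambda>n. H (2*n)) \<longlonglongrightarrow> pi^2 / 6"
    using LIMSEQ_subseq_LIMSEQ[OF H_limit, of "\<lambda>n. 2*n"] by (simp add: strict_mono_def o_def)
  have "(\<lambda>n. H (2*n) - H n / 4) \<longlonglongrightarrow> pi^2 / 6 - (pi^2 / 6) / 4"
    by (intro tendsto_diff tendsto_divide H_limit H_double_limit tendsto_const) simp
  also have "(\<lambda>n. H (2*n) - H n / 4) = (\<lambda>n. \<Sum>j<n. 1 / (2 * real j + 1)^2)"
    using H_double by simp
  finally show ?thesis by (simp add: sums_def)
qed

text \<open>Every factor \<open>1 - a\<close> of the product except the first is at most \<open>exp (-a)\<close>, and the
  remaining exponents add up to \<open>4 s^2 (pi^2/8 - 1)\<close>.\<close>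
lemma cos_le_one_minus_sq_mult_exp:
  fixes s :: real
  assumes "\<bar>s\<bar> \<le> 1/2"
  shows "cos (pi * s) \<le> (1 - 4 * s^2) * exp (- (pi^2/2 - 4) * s^2)"
proof -
  define f where "f j = 1 - 4 * s^2 / (2 * real j + 1)^2" for j
  define T where "T n = (\<Sum>j<n. 1 / (2 * real j + 1)^2)" for n
  have "\<bar>s\<bar>^2 \<le> (1/2)^2" using assms by (intro power_mono) auto
  then have s_sq: "4 * s^2 \<le> 1" by (simp add: power2_eq_square)
  have f_nonneg: "f j \<ge> 0" for j
  proof -
    have "4 * s^2 / (2 * real j + 1)^2 \<le> 4 * s^2 / 1"
      by (intro divide_left_mono) auto
    then have "4 * s^2 / (2 * real j + 1)^2 \<le> 1" using s_sq by linarith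
    then show ?thesis by (simp add: f_def)
  qed
  have f_le_exp: "f j \<le> exp (- (4 * s^2 / (2 * real j + 1)^2))" for j
    unfolding f_def using exp_ge_add_one_self[of "- (4 * s^2 / (2 * real j + 1)^2)"] by simp
  have partial_bound: "(\<Prod>j<Suc n. f j) \<le> (1 - 4 * s^2) * exp (- (4 * s^2) * (T (Suc n) - 1))" for n
  proof (induction n)
    case 0
    show ?case by (simp add: f_def T_def)
  next
    case (Suc n)
    have "(\<Prod>j<Suc (Suc n). f j) = (\<Prod>j<Suc n. f j) * f (Suc n)" by simp
    also have "\<dots> \<le> ((1 - 4 * s^2) * exp (- (4 * s^2) * (T (Suc n) - 1)))
                     * exp (- (4 * s^2 / (2 * real (Suc n) + 1)^2))"
      using s_sq by (intro mult_mono Suc.IH f_le_exp f_nonneg) auto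
    also have "\<dots> = (1 - 4 * s^2) * exp (- (4 * s^2) * (T (Suc (Suc n)) - 1))"
      by (simp add: T_def mult.assoc algebra_simps flip: exp_add)
    finally show ?case .
  qed
  have "(\<lambda>n. \<Prod>j<Suc n. f j) \<longlonglongrightarrow> cos (pi * s)"
    using LIMSEQ_Suc[OF cos_product_formula_real] assms by (simp add: f_def)
  moreover have "(\<lambda>n. (1 - 4 * s^2) * exp (- (4 * s^2) * (T (Suc n) - 1)))
      \<longlonglongrightarrow> (1 - 4 * s^2) * exp (- (4 * s^2) * (pi^2/8 - 1))"
    using sums_inverse_odd_squares unfolding T_def sums_def
    by (intro tendsto_intros LIMSEQ_Suc)
  ultimately have "cos (pi * s) \<le> (1 - 4 * s^2) * exp (- (4 * s^2) * (pi^2/8 - 1))"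
    using partial_bound by (intro LIMSEQ_le) auto
  also have "- (4 * s^2) * (pi^2/8 - 1) = - (pi^2/2 - 4) * s^2"
    by (simp add: algebra_simps)
  finally show ?thesis .
qed

lemma one_minus_mult_exp_antimono:
  fixes y z :: real
  assumes "0 \<le> y" "y \<le> z"
  shows "(1 - z) * exp z \<le> (1 - y) * exp y"
proof (rule deriv_nonpos_imp_antimono[of y z "\<lambda>y. (1 - y) * exp y" "\<lambda>y. - y * exp y"])
  fix x assume "x \<in> {y..z}"
  then show "- x * exp x \<le> 0" using assms by auto
  show "((\<lambda>y. (1 - y) * exp y) has_real_derivative - x * exp x) (at x)"
    by (auto intro!: derivative_eq_intros simp: algebra_simps)
qed (use assms in auto)

text \<open>As \<open>(1 - y) exp y\<close> decreases and \<open>(s/b)^2 <= 4 s^2\<close>, the factor \<open>1 - 4 s^2\<close> may be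
  replaced by \<open>1 - (s/b)^2\<close> at the price of a factor \<open>exp (4 s^2 - (s/b)^2)\<close>.\<close>
lemma cos_le_scaled_bound:
  fixes s b :: real
  assumes b: "1/2 \<le> b" and s: "\<bar>s\<bar> \<le> 1/2"
  shows "cos (pi * s) \<le> (1 - (s/b)^2) * exp (- (pi^2 * b^2 / 2 - 1) * (s/b)^2)"
proof -
  have "1/2 * (1/2) \<le> b * b" using b by (intro mult_mono) auto
  then have "s^2 / b^2 \<le> s^2 / (1/4)" by (intro divide_left_mono) (auto simp: power2_eq_square)
  then have u_sq: "(s/b)^2 \<le> 4 * s^2" by (simp add: power_divide)
  have "cos (pi * s) \<le> (1 - 4 * s^2) * exp (- (pi^2/2 - 4) * s^2)"
    using s by (rule cos_le_one_minus_sq_mult_exp)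
  also have "\<dots> = ((1 - 4 * s^2) * exp (4 * s^2)) * exp (- (pi^2/2) * s^2)"
    by (simp add: mult.assoc algebra_simps flip: exp_add)
  also have "\<dots> \<le> ((1 - (s/b)^2) * exp ((s/b)^2)) * exp (- (pi^2/2) * s^2)"
    using one_minus_mult_exp_antimono[OF _ u_sq] by (intro mult_right_mono) auto
  also have "\<dots> = (1 - (s/b)^2) * exp (- (pi^2 * b^2 / 2 - 1) * (s/b)^2)"
  proof -
    have "s^2 = b^2 * (s/b)^2" using b by (simp add: power_divide)
    then have "(s/b)^2 + - (pi^2/2) * s^2 = - (pi^2 * b^2 / 2 - 1) * (s/b)^2"
      by (simp add: algebra_simps)
    then show ?thesis by (simp add: mult.assoc flip: exp_add)
  qed
  finally show ?thesis .
qed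

section \<open>A two-point power mean inequality\<close>

definition log_ratio_gap :: "real \<Rightarrow> real \<Rightarrow> real" where
  "log_ratio_gap q w =
     ln (1 + q * w - q * w^2) - ln (1 - q * w - q * w^2) - q * (ln (1 + w) - ln (1 - w))"

lemma log_ratio_gap_denominators_pos:
  fixes q w z :: real
  assumes "0 \<le> q" "0 \<le> w" "w \<le> z" "z < 1" "0 < 1 - q * z - q * z^2"
  shows "0 < 1 + q * w - q * w^2" and "0 < 1 - q * w - q * w^2"
proof -
  have "0 \<le> q * w * (1 - w)" using assms by auto
  then show "0 < 1 + q * w - q * w^2" by (simp add: algebra_simps power2_eq_square)
  have "q * w \<le> q * z" "q * w^2 \<le> q * z^2"
    using assms by (auto intro!: mult_left_mono power_mono)
  then show "0 < 1 - q * w - q * w^2" using assms by linarith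
qed

lemma has_real_derivative_log_ratio_gap:
  fixes q w :: real
  assumes "0 \<le> q" "0 \<le> w" "w < 1" "0 < 1 - q * w - q * w^2"
  shows "(log_ratio_gap q has_real_derivative
           2 * q * w^2 * ((q^2 + 3 * q - 1) - (q^2 + q) * w^2)
             / ((1 + q * w - q * w^2) * (1 - q * w - q * w^2) * (1 - w^2))) (at w)"
proof -
  define A where "A = 1 + q * w - q * w^2"
  define B where "B = 1 - q * w - q * w^2"
  have A: "0 < A" and B: "0 < B"
    using log_ratio_gap_denominators_pos[OF assms(1,2) order_refl assms(3,4)] by (simp_all add: A_def B_def)
  have W: "1 - w^2 \<noteq> 0" "1 + w \<noteq> 0" "1 - w \<noteq> 0"
    using assms by (auto simp: abs_square_eq_1)
  have "(log_ratio_gap q has_real_derivative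
      (q - 2 * q * w) / A - (- q - 2 * q * w) / B - q * (1 / (1 + w) - (- 1) / (1 - w))) (at w)"
    unfolding log_ratio_gap_def A_def B_def using A B assms
    by (auto intro!: derivative_eq_intros simp: power2_eq_square mult_ac A_def B_def)
  also have "(q - 2 * q * w) / A - (- q - 2 * q * w) / B - q * (1 / (1 + w) - (- 1) / (1 - w))
      = ((q - 2 * q * w) * B * (1 - w^2) + (q + 2 * q * w) * A * (1 - w^2) - 2 * q * (A * B))
          / (A * B * (1 - w^2))"
    using A B W by (simp add: field_simps power2_eq_square)
  also have "(q - 2 * q * w) * B * (1 - w^2) + (q + 2 * q * w) * A * (1 - w^2) - 2 * q * (A * B)
      = 2 * q * w^2 * ((q^2 + 3 * q - 1) - (q^2 + q) * w^2)"
    unfolding A_def B_def by (simp add: algebra_simps power2_eq_square)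
  finally show ?thesis by (simp add: A_def B_def)
qed

lemma log_ratio_gap_mono:
  fixes q a b :: real
  assumes "0 \<le> q" "0 \<le> a" "a \<le> b" "b < 1" "0 < 1 - q * b - q * b^2"
    and "\<forall>w\<in>{a..b}. (q^2 + q) * w^2 \<le> q^2 + 3 * q - 1"
  shows "log_ratio_gap q a \<le> log_ratio_gap q b"
proof (rule deriv_nonneg_imp_mono[OF has_real_derivative_log_ratio_gap])
  fix w assume w: "w \<in> {a..b}"
  note pos = log_ratio_gap_denominators_pos[OF assms(1) _ _ assms(4,5), of w]
  show "0 < 1 - q * w - q * w^2" using pos w assms by auto
  have "0 < 1 - w^2" using w assms by (simp add: abs_square_less_1)
  then show "0 \<le> 2 * q * w^2 * ((q^2 + 3 * q - 1) - (q^2 + q) * w^2)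
      / ((1 + q * w - q * w^2) * (1 - q * w - q * w^2) * (1 - w^2))"
    using pos w assms by (intro divide_nonneg_pos mult_nonneg_nonneg mult_pos_pos) auto
qed (use assms in auto)

lemma log_ratio_gap_antimono:
  fixes q a b :: real
  assumes "0 \<le> q" "0 \<le> a" "a \<le> b" "b < 1" "0 < 1 - q * b - q * b^2"
    and "\<forall>w\<in>{a..b}. q^2 + 3 * q - 1 \<le> (q^2 + q) * w^2"
  shows "log_ratio_gap q b \<le> log_ratio_gap q a"
proof (rule deriv_nonpos_imp_antimono[OF has_real_derivative_log_ratio_gap])
  fix w assume w: "w \<in> {a..b}"
  note pos = log_ratio_gap_denominators_pos[OF assms(1) _ _ assms(4,5), of w]
  show "0 < 1 - q * w - q * w^2" using pos w assms by auto
  have "0 < 1 - w^2" using w assms by (simp add: abs_square_less_1)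
  then have "0 < (1 + q * w - q * w^2) * (1 - q * w - q * w^2) * (1 - w^2)"
    using pos w assms by (intro mult_pos_pos) auto
  moreover have "2 * q * w^2 * ((q^2 + 3 * q - 1) - (q^2 + q) * w^2) \<le> 0"
    using w assms by (intro mult_nonneg_nonpos) auto
  ultimately show "2 * q * w^2 * ((q^2 + 3 * q - 1) - (q^2 + q) * w^2)
      / ((1 + q * w - q * w^2) * (1 - q * w - q * w^2) * (1 - w^2)) \<le> 0"
    by (simp add: divide_nonpos_pos)
qed (use assms in auto)

text \<open>The derivative changes sign at most once, from \<open>+\<close> to \<open>-\<close>, and the gap vanishes at
  \<open>0\<close>; so it is nonnegative on \<open>[0, z]\<close> as soon as it is at \<open>z\<close>.\<close>
lemma log_ratio_gap_nonneg_below: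
  fixes q y z :: real
  assumes "0 \<le> q" "0 \<le> y" "y \<le> z" "z < 1" "0 < 1 - q * z - q * z^2"
    and "0 \<le> log_ratio_gap q z"
  shows "0 \<le> log_ratio_gap q y"
proof (cases "(q^2 + q) * y^2 \<le> q^2 + 3 * q - 1")
  case True
  have "\<forall>w\<in>{0..y}. (q^2 + q) * w^2 \<le> q^2 + 3 * q - 1"
  proof
    fix w assume "w \<in> {0..y}"
    then have "(q^2 + q) * w^2 \<le> (q^2 + q) * y^2"
      using assms by (intro mult_left_mono power_mono) auto
    then show "(q^2 + q) * w^2 \<le> q^2 + 3 * q - 1" using True by linarith
  qed
  moreover have "0 < 1 - q * y - q * y^2"
    using log_ratio_gap_denominators_pos(2)[OF assms(1,2,3,4,5)] .
  ultimately have "log_ratio_gap q 0 \<le> log_ratio_gap q y"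
    using assms by (intro log_ratio_gap_mono) auto
  then show ?thesis by (simp add: log_ratio_gap_def)
next
  case False
  have "\<forall>w\<in>{y..z}. q^2 + 3 * q - 1 \<le> (q^2 + q) * w^2"
  proof
    fix w assume "w \<in> {y..z}"
    then have "(q^2 + q) * y^2 \<le> (q^2 + q) * w^2"
      using assms by (intro mult_left_mono power_mono) auto
    then show "q^2 + 3 * q - 1 \<le> (q^2 + q) * w^2" using False by linarith
  qed
  then have "log_ratio_gap q z \<le> log_ratio_gap q y"
    using assms by (intro log_ratio_gap_antimono) auto
  then show ?thesis using assms(6) by linarith
qed

lemma log_ratio_gap_nonneg_iff:
  fixes q y :: real
  assumes "0 \<le> q" "0 \<le> y" "y < 1" "0 < 1 - q * y - q * y^2"
  shows "0 \<le> log_ratio_gap q y \<longleftrightarrow>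
           ((1 + y) / (1 - y)) powr q \<le> (1 + q * y - q * y^2) / (1 - q * y - q * y^2)"
proof -
  have A: "0 < 1 + q * y - q * y^2"
    using log_ratio_gap_denominators_pos(1)[OF assms(1,2) order_refl assms(3,4)] .
  have "log_ratio_gap q y
      = ln ((1 + q * y - q * y^2) / (1 - q * y - q * y^2)) - ln (((1 + y) / (1 - y)) powr q)"
    using assms A by (simp add: log_ratio_gap_def ln_div ln_powr)
  then have "0 \<le> log_ratio_gap q y \<longleftrightarrow>
      ln (((1 + y) / (1 - y)) powr q) \<le> ln ((1 + q * y - q * y^2) / (1 - q * y - q * y^2))"
    by linarith
  also have "\<dots> \<longleftrightarrow> ((1 + y) / (1 - y)) powr q \<le> (1 + q * y - q * y^2) / (1 - q * y - q * y^2)"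
    using assms A by (intro ln_le_cancel_iff) auto
  finally show ?thesis .
qed

lemma powr_diff_le_of_log_ratio_gap:
  fixes p q y :: real
  assumes p: "1 \<le> p" "p - 1 \<le> q" and y: "0 \<le> y" "y < 1"
    and gap: "0 < 1 - q * y - q * y^2 \<Longrightarrow> 0 \<le> log_ratio_gap q y"
  shows "(1 + y) powr (p - 1) - (1 - y) powr (p - 1) \<le> q * y * ((1 + y) powr p + (1 - y) powr p)"
proof -
  define a where "a = (1 - y) powr (p - 1)"
  define r where "r = (1 + y) / (1 - y)"
  have a: "0 < a" using y by (simp add: a_def)
  have r: "1 \<le> r" using y by (simp add: r_def field_simps)
  have "1 + y = r * (1 - y)" using y by (simp add: r_def)
  then have lower_powr: "(1 + y) powr (p - 1) = r powr (p - 1) * a"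
    unfolding a_def using y r by (simp add: powr_mult)
  have key: "r powr (p - 1) * (1 - q * y * (1 + y)) \<le> 1 + q * y * (1 - y)"
  proof (cases "0 < 1 - q * y - q * y^2")
    case True
    have "r powr (p - 1) \<le> r powr q" using r p by (intro powr_mono) auto
    also have "\<dots> \<le> (1 + q * y - q * y^2) / (1 - q * y - q * y^2)"
      using gap[OF True] log_ratio_gap_nonneg_iff[of q y] True p y by (simp add: r_def)
    finally have "r powr (p - 1) * (1 - q * y - q * y^2) \<le> 1 + q * y - q * y^2"
      using True by (simp add: pos_le_divide_eq)
    then show ?thesis by (simp add: algebra_simps power2_eq_square)
  next
    case False
    then have "r powr (p - 1) * (1 - q * y * (1 + y)) \<le> 0"
      by (intro mult_nonneg_nonpos) (auto simp: algebra_simps power2_eq_square)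
    moreover have "0 \<le> 1 + q * y * (1 - y)" using y p by simp
    ultimately show ?thesis by linarith
  qed
  have "(1 + y) powr (p - 1) - (1 - y) powr (p - 1) = a * (r powr (p - 1) - 1)"
    by (simp add: lower_powr a_def algebra_simps)
  also have "\<dots> \<le> a * (q * y * ((1 + y) * r powr (p - 1) + (1 - y)))"
    using key a by (intro mult_left_mono) (auto simp: algebra_simps)
  also have "\<dots> = q * y * ((1 + y) * (1 + y) powr (p - 1) + (1 - y) * (1 - y) powr (p - 1))"
    by (simp add: lower_powr a_def algebra_simps)
  also have "\<dots> = q * y * ((1 + y) powr p + (1 - y) powr p)"
    using y by (simp add: powr_mult_base)
  finally show ?thesis .
qed

text \<open>Compare logarithms: by \<open>powr_diff_le_of_log_ratio_gap\<close>, the derivative of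
  \<open>ln (((1 + y)^p + (1 - y)^p) / 2)\<close> is at most \<open>p q y\<close>.\<close>
lemma two_point_powr_mean_le_exp:
  fixes p q u :: real
  assumes p: "1 \<le> p" "p - 1 \<le> q" and u: "0 \<le> u" "u < 1"
    and gap: "\<forall>y\<in>{0..u}. 0 < 1 - q * y - q * y^2 \<longrightarrow> 0 \<le> log_ratio_gap q y"
  shows "((1 + u) powr p + (1 - u) powr p) / 2 \<le> exp (p * q / 2 * u^2)"
proof -
  define S where "S y = (1 + y) powr p + (1 - y) powr p" for y
  define F where "F y = p * q / 2 * y^2 - ln (S y / 2)" for y
  have S_pos: "0 < S y" if "0 \<le> y" "y < 1" for y
    using that by (simp add: S_def add_pos_pos)
  have "F 0 \<le> F u"
  proof (rule deriv_nonneg_imp_mono[of 0 u F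
      "\<lambda>y. p * q * y - (p * (1 + y) powr (p - 1) - p * (1 - y) powr (p - 1)) / S y"])
    fix y assume y: "y \<in> {0..u}"
    then have y': "0 \<le> y" "y < 1" using u by auto
    have "(S has_real_derivative p * (1 + y) powr (p - 1) - p * (1 - y) powr (p - 1)) (at y)"
      unfolding S_def using y' by (auto intro!: derivative_eq_intros)
    then show "(F has_real_derivative
        p * q * y - (p * (1 + y) powr (p - 1) - p * (1 - y) powr (p - 1)) / S y) (at y)"
      unfolding F_def using S_pos[OF y']
      by (auto intro!: derivative_eq_intros simp: field_simps power2_eq_square)
    have "(1 + y) powr (p - 1) - (1 - y) powr (p - 1) \<le> q * y * S y"
      unfolding S_def using y gap p y' by (intro powr_diff_le_of_log_ratio_gap) auto
    then have "p * ((1 + y) powr (p - 1) - (1 - y) powr (p - 1)) \<le> p * (q * y * S y)"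
      using p by (intro mult_left_mono) auto
    then show "0 \<le> p * q * y - (p * (1 + y) powr (p - 1) - p * (1 - y) powr (p - 1)) / S y"
      using S_pos[OF y'] by (simp add: pos_divide_le_eq algebra_simps)
  qed (use u in auto)
  then have "ln (S u / 2) \<le> p * q / 2 * u^2" by (simp add: F_def S_def)
  then have "S u / 2 \<le> exp (p * q / 2 * u^2)"
    using S_pos[OF u] by (metis exp_le_cancel_iff exp_ln half_gt_zero)
  then show ?thesis by (simp add: S_def)
qed

lemma log_ratio_gap_nonneg_of_ge_half:
  fixes q y :: real
  assumes "1/2 \<le> q" "0 \<le> y" "y < 1" "0 < 1 - q * y - q * y^2"
  shows "0 \<le> log_ratio_gap q y"
proof -
  have "\<forall>w\<in>{0..y}. (q^2 + q) * w^2 \<le> q^2 + 3 * q - 1"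
  proof
    fix w assume "w \<in> {0..y}"
    then have "w^2 \<le> 1" using assms by (simp add: power_le_one)
    then have "(q^2 + q) * w^2 \<le> q^2 + q" using assms by (simp add: mult_left_le)
    then show "(q^2 + q) * w^2 \<le> q^2 + 3 * q - 1" using assms by simp
  qed
  then have "log_ratio_gap q 0 \<le> log_ratio_gap q y"
    using assms by (intro log_ratio_gap_mono) auto
  then show ?thesis by (simp add: log_ratio_gap_def)
qed

lemma pi_sq_quarter_minus_two_bounds: "467/1000 < pi^2/4 - 2" "pi^2/4 - 2 < 47/100"
proof -
  have "3.14159 * 3.14159 \<le> pi * pi" using pi_approx by (intro mult_mono) auto
  then show "467/1000 < pi^2/4 - 2" by (simp add: power2_eq_square)
  have "pi * pi \<le> 3.1416 * 3.1416" using pi_approx by (intro mult_mono) auto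
  then show "pi^2/4 - 2 < 47/100" by (simp add: power2_eq_square)
qed

lemma powr_99_le_10: "(99::real) powr (47/100) \<le> 10"
proof (rule power_le_imp_le_base[of _ 99])
  have "((99::real) powr (47/100)) ^ Suc 99 = 99 powr (47/100 * real (Suc 99))"
    by (subst powr_realpow[symmetric]) (auto simp: powr_powr)
  also have "\<dots> = 99 powr (real (47::nat))" by simp
  also have "\<dots> = 99 ^ 47" by (subst powr_realpow) auto
  also have "\<dots> \<le> (10::real) ^ Suc 99" by simp
  finally show "((99::real) powr (47/100)) ^ Suc 99 \<le> 10 ^ Suc 99" .
qed simp

lemma log_ratio_gap_nonneg_critical:
  fixes y :: real
  defines "q \<equiv> pi^2/4 - 2"
  assumes "0 \<le> y" "y \<le> 49/50"
  shows "0 \<le> log_ratio_gap q y"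
proof (rule log_ratio_gap_nonneg_below[OF _ assms(2,3)])
  have q: "467/1000 < q" "q < 47/100" using pi_sq_quarter_minus_two_bounds by (auto simp: q_def)
  then show "0 \<le> q" by simp
  show denominator: "0 < 1 - q * (49/50) - q * (49/50)^2" using q by (simp add: power2_eq_square)
  have "((1 + 49/50) / (1 - 49/50::real)) powr q = 99 powr q" by simp
  also have "\<dots> \<le> 99 powr (47/100)" using q by (intro powr_mono) auto
  also have "\<dots> \<le> 10" by (rule powr_99_le_10)
  also have "10 \<le> (1 + q * (49/50) - q * (49/50)^2) / (1 - q * (49/50) - q * (49/50)^2)"
    using q denominator by (simp add: le_divide_eq power2_eq_square algebra_simps)
  finally show "0 \<le> log_ratio_gap q (49/50)"
    using log_ratio_gap_nonneg_iff[of q "49/50"] q denominator by simp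
qed simp

lemma add_powr_le_powr_add:
  fixes x y p :: real
  assumes "0 \<le> x" "0 \<le> y" "1 \<le> p"
  shows "x powr p + y powr p \<le> (x + y) powr p"
proof (cases "x + y = 0")
  case True
  then have "x = 0" "y = 0" using assms by linarith+
  then show ?thesis by simp
next
  case False
  have "x powr p = x * x powr (p - 1)" "y powr p = y * y powr (p - 1)"
    using assms by (auto simp: powr_mult_base)
  moreover have "x * x powr (p - 1) \<le> x * (x + y) powr (p - 1)"
    "y * y powr (p - 1) \<le> y * (x + y) powr (p - 1)"
    using assms by (auto intro!: mult_left_mono powr_mono2)
  moreover have "x * (x + y) powr (p - 1) + y * (x + y) powr (p - 1) = (x + y) powr p"
    using assms False by (simp add: powr_mult_base flip: distrib_right)
  ultimately show ?thesis by linarith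
qed

lemma two_point_powr_mean_le_exp_of_ge_half:
  fixes p q u :: real
  assumes "1/2 \<le> q" "1 \<le> p" "p - 1 \<le> q" "0 \<le> u" "u < 1"
  shows "((1 + u) powr p + (1 - u) powr p) / 2 \<le> exp (p * q / 2 * u^2)"
  using assms by (intro two_point_powr_mean_le_exp log_ratio_gap_nonneg_of_ge_half ballI impI) auto

text \<open>For \<open>u > 49/50\<close> the crude bound \<open>2^p\<close> of the sum suffices, as
  \<open>ln 2 < (1 + q) (49/50)^2 / 2\<close>.\<close>
lemma two_point_powr_mean_le_exp_critical:
  fixes p u :: real
  defines "q \<equiv> pi^2/4 - 2"
  assumes p: "1 \<le> p" "p - 1 \<le> q" and u: "0 \<le> u" "u < 1"
  shows "((1 + u) powr p + (1 - u) powr p) / 2 \<le> exp (p * q / 2 * u^2)"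
proof (cases "u \<le> 49/50")
  case True
  then show ?thesis
    using assms log_ratio_gap_nonneg_critical by (intro two_point_powr_mean_le_exp) auto
next
  case False
  have q: "467/1000 < q" using pi_sq_quarter_minus_two_bounds by (simp add: q_def)
  have "(1 + u) powr p + (1 - u) powr p \<le> ((1 + u) + (1 - u)) powr p"
    using u p by (intro add_powr_le_powr_add) auto
  then have "((1 + u) powr p + (1 - u) powr p) / 2 \<le> 2 powr p / 2" by simp
  also have "2 powr p / 2 = exp ((p - 1) * ln 2)" by (simp add: powr_def exp_diff algebra_simps)
  also have "(p - 1) * ln 2 \<le> (p - 1) * ((1 + q) * u^2 / 2)"
  proof (rule mult_left_mono)
    have "(49/50::real)^2 \<le> u^2" using False by (intro power_mono) auto
    then have "(1467/1000) * (49/50::real)^2 \<le> (1 + q) * u^2" using q by (intro mult_mono) auto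
    then show "ln 2 \<le> (1 + q) * u^2 / 2" using ln2_le_25_over_36 by (simp add: power2_eq_square)
  qed (use p in simp)
  also have "\<dots> \<le> p * q / 2 * u^2"
  proof -
    have "(p - 1) * (1 + q) \<le> p * q" using p by (simp add: algebra_simps)
    then have "(p - 1) * (1 + q) * (u^2 / 2) \<le> p * q * (u^2 / 2)" by (rule mult_right_mono) simp
    then show ?thesis by (simp add: algebra_simps)
  qed
  finally show ?thesis by simp
qed

lemma two_point_powr_mean_le_exp_half_odd:
  fixes n :: nat and p u :: real
  assumes p: "1 \<le> p" "p \<le> pi^2 * (real n + 1/2)^2 - 1" and u: "0 \<le> u" "u < 1"
  shows "((1 + u) powr p + (1 - u) powr p) / 2 \<le> exp (p * (pi^2 * (real n + 1/2)^2 / 2 - 1) * u^2)"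
proof -
  define q where "q = pi^2 * (real n + 1/2)^2 - 2"
  have rate: "p * q / 2 = p * (pi^2 * (real n + 1/2)^2 / 2 - 1)" by (simp add: q_def field_simps)
  have "((1 + u) powr p + (1 - u) powr p) / 2 \<le> exp (p * q / 2 * u^2)"
  proof (cases "n = 0")
    case True
    then have "q = pi^2/4 - 2" by (simp add: q_def power2_eq_square)
    moreover have "p - 1 \<le> pi^2/4 - 2" using p True by (simp add: power2_eq_square)
    ultimately show ?thesis using two_point_powr_mean_le_exp_critical[of p u] p u by simp
  next
    case False
    have "3 * 3 * (3/2 * (3/2)) \<le> pi * pi * ((real n + 1/2) * (real n + 1/2))"
      using False pi_gt3 by (intro mult_mono) auto
    then have "1/2 \<le> q" by (simp add: q_def power2_eq_square)
    then show ?thesis using p u by (intro two_point_powr_mean_le_exp_of_ge_half) (auto simp: q_def)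
  qed
  then show ?thesis by (simp only: rate)
qed

section \<open>The tail of the sinc series\<close>

lemma cos_pi_mult_nonneg:
  fixes s :: real
  assumes "\<bar>s\<bar> \<le> 1/2"
  shows "0 \<le> cos (pi * s)"
proof (rule cos_ge_zero)
  have "pi * (-1/2) \<le> pi * s" "pi * s \<le> pi * (1/2)"
    using assms by (intro mult_left_mono; simp)+
  then show "- (pi / 2) \<le> pi * s" "pi * s \<le> pi / 2" by simp_all
qed

lemma cos_div_le_scaled:
  fixes b s :: real
  assumes b: "1/2 \<le> b" and s: "\<bar>s\<bar> < 1/2"
  shows "cos (pi * s) / (pi * (b + s))
           \<le> (1 - s / b) * exp (- (pi^2 * b^2 / 2 - 1) * (s / b)^2) / (pi * b)"
proof -
  define u where "u = s / b"
  define e where "e = exp (- (pi^2 * b^2 / 2 - 1) * u^2)"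
  have "\<bar>s\<bar> < b" using s b by linarith
  then have u: "\<bar>u\<bar> < 1" using b by (simp add: u_def abs_divide)
  have plus: "b + s = b * (1 + u)" using b by (simp add: u_def field_simps)
  have "cos (pi * s) \<le> (1 - u^2) * e"
    using cos_le_scaled_bound[OF b] s by (simp add: u_def e_def)
  then have "cos (pi * s) / (pi * (b + s)) \<le> (1 - u^2) * e / (pi * (b + s))"
    using b s by (intro divide_right_mono) auto
  also have "\<dots> = ((1 - u) * e * (1 + u)) / ((pi * b) * (1 + u))"
    unfolding plus by (simp add: power2_eq_square algebra_simps)
  also have "\<dots> = (1 - u) * e / (pi * b)"
    using u by (intro nonzero_mult_divide_mult_cancel_right) auto
  finally show ?thesis by (simp add: u_def e_def)
qed

lemma cos_pair_powr_le:
  fixes n :: nat and p s :: real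
  assumes p: "1 \<le> p" "p \<le> pi^2 * (real n + 1/2)^2 - 1" and s: "\<bar>s\<bar> < 1/2"
  shows "(cos (pi * s) / (pi * (real n + 1/2 + s))) powr p
           + (cos (pi * s) / (pi * (real n + 1/2 - s))) powr p
         \<le> 2 * (1 / (pi * (real n + 1/2))) powr p"
proof -
  define b where "b = real n + 1/2"
  define u where "u = s / b"
  define c where "c = pi^2 * b^2 / 2 - 1"
  define e where "e = exp (- c * u^2)"
  have b: "1/2 \<le> b" by (simp add: b_def)
  have "\<bar>s\<bar> < b" using s b by linarith
  then have u: "\<bar>u\<bar> < 1" using b by (simp add: u_def abs_divide)
  have e: "0 < e" by (simp add: e_def)
  have "cos (pi * s) / (pi * (b + s)) \<le> (1 - u) * (e / (pi * b))"
    using cos_div_le_scaled[OF b s] by (simp add: u_def c_def e_def)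
  moreover have "cos (pi * s) / (pi * (b - s)) \<le> (1 + u) * (e / (pi * b))"
    using cos_div_le_scaled[OF b, of "- s"] s by (simp add: u_def c_def e_def)
  moreover have "0 \<le> cos (pi * s)" "0 < b + s" "0 < b - s"
    using s b by (auto intro: cos_pi_mult_nonneg)
  ultimately have "(cos (pi * s) / (pi * (b + s))) powr p + (cos (pi * s) / (pi * (b - s))) powr p
      \<le> ((1 - u) * (e / (pi * b))) powr p + ((1 + u) * (e / (pi * b))) powr p"
    using p by (intro add_mono powr_mono2) auto
  also have "\<dots> = (e / (pi * b)) powr p * ((1 + \<bar>u\<bar>) powr p + (1 - \<bar>u\<bar>) powr p)"
  proof -
    have "0 \<le> 1 - u" "0 \<le> 1 + u" "0 \<le> e / (pi * b)" using u e b by auto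
    then have "((1 - u) * (e / (pi * b))) powr p + ((1 + u) * (e / (pi * b))) powr p
        = (e / (pi * b)) powr p * ((1 + u) powr p + (1 - u) powr p)"
      by (simp only: powr_mult) (simp add: algebra_simps)
    moreover have "(1 + u) powr p + (1 - u) powr p = (1 + \<bar>u\<bar>) powr p + (1 - \<bar>u\<bar>) powr p"
      by (cases "0 \<le> u") (simp_all add: add.commute)
    ultimately show ?thesis by (simp only:)
  qed
  also have "\<dots> \<le> (e / (pi * b)) powr p * (2 * exp (p * c * \<bar>u\<bar>^2))"
    using two_point_powr_mean_le_exp_half_odd[OF p, of "\<bar>u\<bar>"] u
    by (intro mult_left_mono) (auto simp: c_def b_def)
  also have "\<dots> = 2 * (1 / (pi * b)) powr p * (e powr p * exp (p * c * u^2))"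
    using e b by (simp add: powr_divide algebra_simps)
  also have "e powr p * exp (p * c * u^2) = 1"
    by (simp add: e_def powr_def flip: exp_add)
  finally show ?thesis by (simp add: b_def)
qed

lemma abs_sin_pi_half_shift:
  fixes j :: int and s :: real
  assumes "\<bar>s\<bar> \<le> 1/2"
  shows "\<bar>sin (pi * (of_int j + 1/2 + s))\<bar> = cos (pi * s)"
proof -
  have "sin (pi * (of_int j + 1/2 + s)) = cos (pi * of_int j) * cos (pi * s)"
    by (simp add: distrib_left sin_add cos_add)
  moreover have "0 \<le> cos (pi * s)" using assms by (rule cos_pi_mult_nonneg)
  ultimately show ?thesis by (simp add: abs_mult)
qed

lemma abs_sinc_tail_terms:
  fixes x s :: real and m :: int and N k :: nat
  assumes x: "x = of_int m + 1/2 + s" and s: "\<bar>s\<bar> < 1/2"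
  shows "\<bar>sinc (x - of_int (m - int N - int k))\<bar> = cos (pi * s) / (pi * (real (N + k) + 1/2 + s))"
    and "\<bar>sinc (x - of_int (m + int N + 1 + int k))\<bar> = cos (pi * s) / (pi * (real (N + k) + 1/2 - s))"
proof -
  have "x - of_int (m - int N - int k) = of_int (int (N + k)) + 1/2 + s"
    using x by simp
  moreover have "0 < real (N + k) + 1/2 + s" using s by simp
  ultimately show "\<bar>sinc (x - of_int (m - int N - int k))\<bar> = cos (pi * s) / (pi * (real (N + k) + 1/2 + s))"
    using abs_sin_pi_half_shift[of s "int (N + k)"] s by (simp only:) (simp add: sinc_def abs_mult)
  have "x - of_int (m + int N + 1 + int k) = of_int (- int (N + k) - 1) + 1/2 + s"
    using x by simp
  moreover have "of_int (- int (N + k) - 1) + 1/2 + s = - (real (N + k) + 1/2 - s)" by simp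
  moreover have "0 < real (N + k) + 1/2 - s" using s by simp
  ultimately show "\<bar>sinc (x - of_int (m + int N + 1 + int k))\<bar> = cos (pi * s) / (pi * (real (N + k) + 1/2 - s))"
    using abs_sin_pi_half_shift[of s "- int (N + k) - 1"] s
    by (simp only:) (simp add: sinc_def abs_mult)
qed

lemma abs_sinc_tail_pair_powr_le:
  fixes N k :: nat and m :: int and p x s :: real
  assumes p: "1 < p" "p \<le> pi^2 * (real N + 1/2)^2 - 1"
    and x: "x = of_int m + 1/2 + s" and s: "\<bar>s\<bar> < 1/2"
  shows "\<bar>sinc (x - of_int (m - int N - int k))\<bar> powr p
           + \<bar>sinc (x - of_int (m + int N + 1 + int k))\<bar> powr p
         \<le> 2 * (1 / (pi * (real (N + k) + 1/2))) powr p"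
proof -
  have "pi^2 * (real N + 1/2)^2 \<le> pi^2 * (real (N + k) + 1/2)^2"
    by (intro mult_left_mono power_mono) auto
  then have "p \<le> pi^2 * (real (N + k) + 1/2)^2 - 1" using p by linarith
  then show ?thesis
    using cos_pair_powr_le[of p "N + k" s] abs_sinc_tail_terms[OF x s] p s by simp
qed

lemma sinc_Ints_eq_0:
  fixes x :: real
  assumes "x \<in> \<int>" "x \<noteq> 0"
  shows "sinc x = 0"
  using assms by (auto simp: sinc_def elim!: Ints_cases)

lemma summable_incomplete_lambda:
  fixes s a :: real
  assumes "1 < s" "0 \<le> a"
  shows "summable (\<lambda>n. 1 / (2 * (real (Suc n) + a) - 1) powr s)"
proof (rule summable_comparison_test')
  have "summable (\<lambda>n. real n powr (- s))" using assms by (simp add: summable_real_powr_iff)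
  then show "summable (\<lambda>n. real (Suc n) powr (- s))" by (subst summable_Suc_iff)
  fix n :: nat
  have "(2 * (real (Suc n) + a) - 1) powr (- s) \<le> real (Suc n) powr (- s)"
    using assms by (intro powr_mono2') auto
  then show "norm (1 / (2 * (real (Suc n) + a) - 1) powr s) \<le> real (Suc n) powr (- s)"
    using assms by (simp add: powr_minus divide_inverse)
qed

lemma sums_incomplete_lambda_scaled:
  fixes p :: real and N :: nat
  assumes "1 < p"
  shows "(\<lambda>k. 2 * (1 / (pi * (real (N + k) + 1/2))) powr p)
           sums (2 * (2 / pi) powr p * incomplete_lambda p (real N))"
proof -
  have term_eq: "2 * (1 / (pi * (real (N + k) + 1/2))) powr p
      = 2 * (2 / pi) powr p * (1 / (2 * (real (Suc k) + real N) - 1) powr p)" for k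
  proof -
    have "1 / (pi * (real (N + k) + 1/2)) = (2 / pi) * (1 / (2 * (real (Suc k) + real N) - 1))"
      by (simp add: field_simps)
    then show ?thesis by (simp add: powr_mult powr_divide)
  qed
  have "(\<lambda>k. 1 / (2 * (real (Suc k) + real N) - 1) powr p) sums incomplete_lambda p (real N)"
    unfolding incomplete_lambda_def using summable_incomplete_lambda[OF assms] by (intro summable_sums) simp
  then show ?thesis unfolding term_eq by (rule sums_mult)
qed

lemma has_sum_int_outside_interval:
  fixes f :: "int \<Rightarrow> real" and m :: int and N :: nat and x :: real
  assumes x: "of_int m < x" "x < of_int m + 1" and f: "\<And>n. 0 \<le> f n"
    and summable: "summable (\<lambda>k. f (m - int N - int k))" "summable (\<lambda>k. f (m + int N + 1 + int k))"
  shows "(f has_sum (\<Sum>k. f (m - int N - int k) + f (m + int N + 1 + int k)))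
           {n. real N < \<bar>x - of_int n\<bar>}"
proof -
  define below where "below = (\<lambda>k::nat. m - int N - int k)"
  define above where "above = (\<lambda>k::nat. m + int N + 1 + int k)"
  have domain: "{n. real N < \<bar>x - of_int n\<bar>} = range below \<union> range above"
  proof (intro equalityI subsetI)
    fix n assume "n \<in> {n. real N < \<bar>x - of_int n\<bar>}"
    then have n: "real N < \<bar>x - of_int n\<bar>" by simp
    show "n \<in> range below \<union> range above"
    proof (cases "n \<le> m")
      case True
      then have "real_of_int (int N - 1) < real_of_int (m - n)" using n x by auto
      then have "n = below (nat (m - n - int N))" unfolding below_def of_int_less_iff by simp
      then show ?thesis by blast
    next
      case False
      then have "real_of_int (int N) < real_of_int (n - m)" using n x by auto
      then have "n = above (nat (n - m - int N - 1))" unfolding above_def of_int_less_iff by simp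
      then show ?thesis by blast
    qed
  next
    fix n assume "n \<in> range below \<union> range above"
    then obtain k where "n = below k \<or> n = above k" by blast
    then have "x - of_int n = real (N + k) + (x - of_int m) \<or> x - of_int n = - (real (N + k) + 1 - (x - of_int m))"
      by (auto simp: below_def above_def)
    then show "n \<in> {n. real N < \<bar>x - of_int n\<bar>}" using x by auto
  qed
  have reindex: "(f has_sum (\<Sum>k. f (h k))) (range h)"
    if "inj h" "summable (\<lambda>k. f (h k))" for h :: "nat \<Rightarrow> int"
  proof -
    have "((\<lambda>k. f (h k)) has_sum (\<Sum>k. f (h k))) UNIV"
      using that(2) f by (intro sums_nonneg_imp_has_sum summable_sums)
    then show ?thesis by (simp add: has_sum_reindex[OF that(1)] o_def)
  qed
  have "inj below" "inj above" by (simp_all add: inj_def below_def above_def)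
  then have "(f has_sum (\<Sum>k. f (below k)) + (\<Sum>k. f (above k))) (range below \<union> range above)"
    using summable unfolding below_def above_def
    by (intro has_sum_Un_disjoint reindex) auto
  also have "(\<Sum>k. f (below k)) + (\<Sum>k. f (above k)) = (\<Sum>k. f (below k) + f (above k))"
    using summable by (simp add: suminf_add below_def above_def)
  finally show ?thesis unfolding domain by (simp only: below_def above_def)
qed

lemma incomplete_lambda_scaled_nonneg:
  fixes p :: real and N :: nat
  assumes "1 < p"
  shows "0 \<le> 2 * (2 / pi) powr p * incomplete_lambda p (real N)"
  using sums_le[OF _ sums_zero sums_incomplete_lambda_scaled[OF assms, of N]] by simp

lemma has_sum_sinc_tail_le:
  fixes N :: nat and p x :: real
  assumes p: "1 < p" "p \<le> pi^2 * (real N + 1/2)^2 - 1"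
  obtains S where "((\<lambda>n::int. \<bar>sinc (x - of_int n)\<bar> powr p) has_sum S) {n. \<bar>x - of_int n\<bar> > real N}"
    and "S \<le> 2 * (2 / pi) powr p * incomplete_lambda p (real N)"
proof (cases "x \<in> \<int>")
  case True
  then have "((\<lambda>n::int. \<bar>sinc (x - of_int n)\<bar> powr p) has_sum 0) {n. \<bar>x - of_int n\<bar> > real N}"
    by (intro has_sum_0) (auto simp: sinc_Ints_eq_0)
  then show ?thesis using incomplete_lambda_scaled_nonneg[OF p(1)] by (rule that)
next
  case False
  define m where "m = \<lfloor>x\<rfloor>"
  define s where "s = x - of_int m - 1/2"
  define f where "f n = \<bar>sinc (x - of_int n)\<bar> powr p" for n :: int
  define bound where "bound k = 2 * (1 / (pi * (real (N + k) + 1/2))) powr p" for k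
  have x: "of_int m < x" "x < of_int m + 1"
    using False floor_correct[of x] by (auto simp: m_def order.order_iff_strict)
  then have s: "\<bar>s\<bar> < 1/2" unfolding s_def abs_less_iff by linarith
  have pair: "f (m - int N - int k) + f (m + int N + 1 + int k) \<le> bound k" for k
    unfolding f_def bound_def by (rule abs_sinc_tail_pair_powr_le[OF p _ s]) (simp add: s_def)
  have f_nonneg: "0 \<le> f n" for n by (simp add: f_def)
  have bound_sums: "bound sums (2 * (2 / pi) powr p * incomplete_lambda p (real N))"
    unfolding bound_def by (rule sums_incomplete_lambda_scaled[OF p(1)])
  have summable: "summable (\<lambda>k. f (m - int N - int k))" "summable (\<lambda>k. f (m + int N + 1 + int k))"
  proof -
    have "f (m - int N - int k) \<le> bound k" "f (m + int N + 1 + int k) \<le> bound k" for k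
      using pair[of k] f_nonneg[of "m - int N - int k"] f_nonneg[of "m + int N + 1 + int k"]
      by linarith+
    then show "summable (\<lambda>k. f (m - int N - int k))" "summable (\<lambda>k. f (m + int N + 1 + int k))"
      using f_nonneg by (intro summable_comparison_test'[OF sums_summable[OF bound_sums]]; simp)+
  qed
  then have "(f has_sum (\<Sum>k. f (m - int N - int k) + f (m + int N + 1 + int k)))
      {n. \<bar>x - of_int n\<bar> > real N}"
    using x f_nonneg by (intro has_sum_int_outside_interval) auto
  moreover have "(\<Sum>k. f (m - int N - int k) + f (m + int N + 1 + int k)) \<le> (\<Sum>k. bound k)"
    using pair summable sums_summable[OF bound_sums] by (intro suminf_le summable_add) auto
  moreover have "(\<Sum>k. bound k) = 2 * (2 / pi) powr p * incomplete_lambda p (real N)"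
    using bound_sums by (rule sums_unique[symmetric])
  ultimately show ?thesis unfolding f_def by (intro that) auto
qed

lemma has_sum_sinc_tail_half:
  fixes N :: nat and p :: real
  assumes "1 < p"
  shows "((\<lambda>n::int. \<bar>sinc (1/2 - of_int n)\<bar> powr p) has_sum (2 * (2 / pi) powr p * incomplete_lambda p (real N)))
           {n. \<bar>1/2 - of_int n\<bar> > real N}"
proof -
  define f where "f n = \<bar>sinc (1/2 - of_int n)\<bar> powr p" for n :: int
  have terms: "f (- int N - int k) = (1 / (pi * (real (N + k) + 1/2))) powr p"
    "f (int N + 1 + int k) = (1 / (pi * (real (N + k) + 1/2))) powr p" for k
    using abs_sinc_tail_terms[of "1/2" 0 0 N k] by (simp_all add: f_def)
  have f_nonneg: "0 \<le> f n" for n by (simp add: f_def)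
  have lambda_sums: "(\<lambda>k. 2 * (1 / (pi * (real (N + k) + 1/2))) powr p) sums (2 * (2 / pi) powr p * incomplete_lambda p (real N))"
    by (rule sums_incomplete_lambda_scaled[OF assms])
  have "summable (\<lambda>k. (1 / (pi * (real (N + k) + 1/2))) powr p)"
    using summable_mult[OF sums_summable[OF lambda_sums], where c = "1/2"] by simp
  then have "(f has_sum (\<Sum>k. f (0 - int N - int k) + f (0 + int N + 1 + int k))) {n. \<bar>1/2 - of_int n\<bar> > real N}"
    using f_nonneg by (intro has_sum_int_outside_interval) (simp_all add: terms)
  also have "(\<Sum>k. f (0 - int N - int k) + f (0 + int N + 1 + int k)) = 2 * (2 / pi) powr p * incomplete_lambda p (real N)"
    using sums_unique[OF lambda_sums] by (simp add: terms)
  finally show ?thesis unfolding f_def .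
qed

theorem theorem4:
  fixes N :: nat and p :: real
  assumes "1 < p" and "p \<le> pi^2 * (real N + 1/2)^2 - 1"
  shows "(\<forall>x::real.
           (\<lambda>n::int. \<bar>sinc (x - of_int n)\<bar> powr p) summable_on {n::int. \<bar>x - of_int n\<bar> > real N} \<and>
           (\<Sum>\<^sub>\<infinity>n\<in>{n::int. \<bar>x - of_int n\<bar> > real N}. \<bar>sinc (x - of_int n)\<bar> powr p)
             \<le> 2 * (2 / pi) powr p * incomplete_lambda p (real N)) \<and>
         ((\<Sum>\<^sub>\<infinity>n\<in>{n::int. \<bar>1/2 - of_int n\<bar> > real N}. \<bar>sinc (1/2 - of_int n)\<bar> powr p)
             = 2 * (2 / pi) powr p * incomplete_lambda p (real N))"
proof (intro conjI allI)
  fix x :: real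
  obtain S where S: "((\<lambda>n::int. \<bar>sinc (x - of_int n)\<bar> powr p) has_sum S) {n. \<bar>x - of_int n\<bar> > real N}"
    and S_le: "S \<le> 2 * (2 / pi) powr p * incomplete_lambda p (real N)"
    using has_sum_sinc_tail_le[OF assms] .
  show "(\<lambda>n::int. \<bar>sinc (x - of_int n)\<bar> powr p) summable_on {n::int. \<bar>x - of_int n\<bar> > real N}"
    using S by (rule has_sum_imp_summable)
  show "(\<Sum>\<^sub>\<infinity>n\<in>{n::int. \<bar>x - of_int n\<bar> > real N}. \<bar>sinc (x - of_int n)\<bar> powr p)
      \<le> 2 * (2 / pi) powr p * incomplete_lambda p (real N)"
    using infsumI[OF S] S_le by simp
next
  show "(\<Sum>\<^sub>\<infinity>n\<in>{n::int. \<bar>1/2 - of_int n\<bar> > real N}. \<bar>sinc (1/2 - of_int n)\<bar> powr p)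
      = 2 * (2 / pi) powr p * incomplete_lambda p (real N)"
    using has_sum_sinc_tail_half[OF assms(1)] by (rule infsumI)
qed

end
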